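(* Let $\lambda_1,\lambda_2,\lambda_3>0$ satisfy $3\lambda_i^2+\lambda_i(\lambda_j+\lambda_k)-\lambda_j\lambda_k>0$ for each $i$ (with $\{i,j,k\}=\{1,2,3\}$), and let $F_1=F_2=F_3=0$. Then, with $\sigma_i,w_i$ given by the 3D $B_2$ formulas, $0<\sigma_i<w_i$ for $i=1,2,3$; hence $\gamma_i=\frac12$ and $\delta_i=\sigma_i/(w_i-\sigma_i)>0$ are well defined and the ansatz $\hat I(\Omega)=\sum_{i=1}^3\frac{1}{2\pi}w_i\mathcal{F}(\Omega\cdot R_i;\gamma_i,\delta_i)$ is a non-negative function for any orthonormal $R_1,R_2,R_3$.
   Context: For $x,y>0$, $g(x,y;a,b)=\dfrac{2(x-a^2/x)(y-b^2/y)(x-a^2/x+y-b^2/y)}{3(x+y)^2}$; for $\{i,j,k\}=\{1,2,3\}$, $\sigma_i=\lambda_i-g(\lambda_i,\lambda_j;F_i,F_j)-g(\lambda_i,\lambda_k;F_i,F_k)$, $w_i=\sigma_i+2g(\lambda_j,\lambda_k;F_j,F_k)$, $\gamma_i=\frac{F_i+w_i}{2w_i}$, $\delta_i=\frac{\sigma_iw_i-F_i^2}{w_i^2-\sigma_iw_i}$. For $\gamma\in(0,1),\delta>0$, with $\xi=\gamma/\delta$, $\eta=(1-\gamma)/\delta$, $\mathcal{F}(\mu;\gamma,\delta)=\frac{1}{2\mathrm{B}(\xi,\eta)}\left(\frac{1+\mu}{2}\right)^{\xi-1}\left(\frac{1-\mu}{2}\right)^{\eta-1}$ on $[-1,1]$.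 *)

theory Defs
  imports "HOL-Analysis.Analysis"
begin

(* Indices i,j,k range over {0,1,2} (paper: {1,2,3}); for a given i the other
   two indices are j = (i+1) mod 3 and k = (i+2) mod 3. *)

definition gB2 :: "real \<Rightarrow> real \<Rightarrow> real \<Rightarrow> real \<Rightarrow> real" where
  "gB2 x y a b = 2 * (x - a^2/x) * (y - b^2/y) * (x - a^2/x + y - b^2/y) / (3 * (x + y)^2)"

definition sigmaB2 :: "(nat \<Rightarrow> real) \<Rightarrow> (nat \<Rightarrow> real) \<Rightarrow> nat \<Rightarrow> real" where
  "sigmaB2 lam F i = (let j = (i+1) mod 3; k = (i+2) mod 3 in
     lam i - gB2 (lam i) (lam j) (F i) (F j) - gB2 (lam i) (lam k) (F i) (F k))"

definition wB2 :: "(nat \<Rightarrow> real) \<Rightarrow> (nat \<Rightarrow> real) \<Rightarrow> nat \<Rightarrow> real" where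
  "wB2 lam F i = (let j = (i+1) mod 3; k = (i+2) mod 3 in
     sigmaB2 lam F i + 2 * gB2 (lam j) (lam k) (F j) (F k))"

definition gammaB2 :: "(nat \<Rightarrow> real) \<Rightarrow> (nat \<Rightarrow> real) \<Rightarrow> nat \<Rightarrow> real" where
  "gammaB2 lam F i = (F i + wB2 lam F i) / (2 * wB2 lam F i)"

definition deltaB2 :: "(nat \<Rightarrow> real) \<Rightarrow> (nat \<Rightarrow> real) \<Rightarrow> nat \<Rightarrow> real" where
  "deltaB2 lam F i = (sigmaB2 lam F i * wB2 lam F i - (F i)^2) /
                     ((wB2 lam F i)^2 - sigmaB2 lam F i * wB2 lam F i)"

definition Fdist :: "real \<Rightarrow> real \<Rightarrow> real \<Rightarrow> real" where
  "Fdist \<mu> \<gamma> \<delta> = (if -1 \<le> \<mu> \<and> \<mu> \<le> 1 then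
     (let \<xi> = \<gamma> / \<delta>; \<eta> = (1 - \<gamma>) / \<delta> in
       1 / (2 * Beta \<xi> \<eta>) * ((1 + \<mu>)/2) powr (\<xi> - 1) * ((1 - \<mu>)/2) powr (\<eta> - 1))
     else 0)"

definition ansatz :: "(nat \<Rightarrow> real) \<Rightarrow> (nat \<Rightarrow> real) \<Rightarrow> (nat \<Rightarrow> real^3) \<Rightarrow> real^3 \<Rightarrow> real" where
  "ansatz lam F R \<Omega> = (\<Sum>i<3. 1 / (2 * pi) * wB2 lam F i *
      Fdist (\<Omega> \<bullet> R i) (gammaB2 lam F i) (deltaB2 lam F i))"

end

theory Submission
  imports Defs
begin

text \<open>With vanishing F the coupling term is a scaled harmonic mean,
  g(x,y;0,0) = 2xy/(3(x+y)), so
  \<sigma>_i = \<lambda>_i (3\<lambda>_i^2 + \<lambda>_i(\<lambda>_j+\<lambda>_k) - \<lambda>_j\<lambda>_k) / (3(\<lambda>_i+\<lambda>_j)(\<lambda>_i+\<lambda>_k)),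
  which is positive exactly under the hypothesis, while w_i - \<sigma>_i = 2 g(\<lambda>_j,\<lambda>_k;0,0) > 0.
  Then \<gamma>_i = 1/2 and \<delta>_i = \<sigma>_i/(w_i-\<sigma>_i) > 0, so every summand of the ansatz is a
  positive multiple of a Beta density with positive parameters.\<close>

lemma Beta_real_pos:
  fixes a b :: real
  assumes "0 < a" "0 < b"
  shows "0 < Beta a b"
  using assms by (simp add: Beta_def)

lemma Fdist_nonneg:
  assumes "0 < \<gamma>" "\<gamma> < 1" "0 < \<delta>"
  shows "0 \<le> Fdist \<mu> \<gamma> \<delta>"
proof -
  have "0 < Beta (\<gamma> / \<delta>) ((1 - \<gamma>) / \<delta>)"
    using assms by (intro Beta_real_pos) auto
  then show ?thesis unfolding Fdist_def Let_def by auto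
qed

lemma gB2_zero_zero: "gB2 x y 0 0 = 2 * x * y / (3 * (x + y))"
proof (cases "x + y = 0")
  case False
  then show ?thesis unfolding gB2_def by (simp add: power2_eq_square)
qed (simp add: gB2_def)

lemma gB2_zero_zero_pos: "0 < x \<Longrightarrow> 0 < y \<Longrightarrow> 0 < gB2 x y 0 0"
  by (simp add: gB2_zero_zero)

lemma diff_gB2_zero_zero_pos:
  fixes a b c :: real
  assumes "0 < a" "0 < b" "0 < c" "0 < 3 * a^2 + a * (b + c) - b * c"
  shows "0 < a - gB2 a b 0 0 - gB2 a c 0 0"
proof -
  have "a - gB2 a b 0 0 - gB2 a c 0 0
      = a * (3 * a^2 + a * (b + c) - b * c) / (3 * (a + b) * (a + c))"
    using assms unfolding gB2_zero_zero
    by (simp add: divide_simps) (simp add: algebra_simps power2_eq_square)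
  also have "\<dots> > 0"
    using assms by (intro divide_pos_pos mult_pos_pos) auto
  finally show ?thesis .
qed

lemma gammaB2_eq_half:
  "F i = 0 \<Longrightarrow> wB2 lam F i \<noteq> 0 \<Longrightarrow> gammaB2 lam F i = 1/2"
  by (simp add: gammaB2_def)

lemma deltaB2_eq:
  assumes "F i = 0" "wB2 lam F i \<noteq> 0"
  shows "deltaB2 lam F i = sigmaB2 lam F i / (wB2 lam F i - sigmaB2 lam F i)"
proof -
  have "(wB2 lam F i)^2 - sigmaB2 lam F i * wB2 lam F i
      = wB2 lam F i * (wB2 lam F i - sigmaB2 lam F i)"
    by (simp add: power2_eq_square algebra_simps)
  then show ?thesis
    using assms by (simp add: deltaB2_def)
qed

lemma ansatz_nonneg:
  assumes "\<And>i. i < 3 \<Longrightarrow>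
      0 \<le> wB2 lam F i \<and> 0 < gammaB2 lam F i \<and> gammaB2 lam F i < 1 \<and> 0 < deltaB2 lam F i"
  shows "0 \<le> ansatz lam F R \<Omega>"
  unfolding ansatz_def
proof (rule sum_nonneg)
  fix i assume "i \<in> {..<3::nat}"
  with assms have "0 \<le> wB2 lam F i"
      and "0 \<le> Fdist (\<Omega> \<bullet> R i) (gammaB2 lam F i) (deltaB2 lam F i)"
    by (auto intro: Fdist_nonneg)
  then show "0 \<le> 1 / (2 * pi) * wB2 lam F i
      * Fdist (\<Omega> \<bullet> R i) (gammaB2 lam F i) (deltaB2 lam F i)"
    by simp
qed

theorem mainTheorem10:
  fixes lam F :: "nat \<Rightarrow> real"
  assumes pos: "\<And>i. i < 3 \<Longrightarrow> lam i > 0"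
    and cond: "\<And>i. i < 3 \<Longrightarrow>
       3 * (lam i)^2 + lam i * (lam ((i+1) mod 3) + lam ((i+2) mod 3))
         - lam ((i+1) mod 3) * lam ((i+2) mod 3) > 0"
    and F0: "\<And>i. i < 3 \<Longrightarrow> F i = 0"
  shows "(\<forall>i<3. 0 < sigmaB2 lam F i \<and> sigmaB2 lam F i < wB2 lam F i
            \<and> gammaB2 lam F i = 1/2
            \<and> deltaB2 lam F i = sigmaB2 lam F i / (wB2 lam F i - sigmaB2 lam F i)
            \<and> deltaB2 lam F i > 0)
         \<and> (\<forall>(R :: nat \<Rightarrow> real^3) (\<Omega> :: real^3).
              (\<forall>i<3. \<forall>j<3. R i \<bullet> R j = (if i = j then 1 else 0)) \<and> norm \<Omega> = 1
              \<longrightarrow> ansatz lam F R \<Omega> \<ge> 0)"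
proof -
  have coeffs: "0 < sigmaB2 lam F i \<and> sigmaB2 lam F i < wB2 lam F i
      \<and> gammaB2 lam F i = 1/2
      \<and> deltaB2 lam F i = sigmaB2 lam F i / (wB2 lam F i - sigmaB2 lam F i)
      \<and> deltaB2 lam F i > 0" if i: "i < 3" for i
  proof -
    define j k where "j = (i+1) mod 3" and "k = (i+2) mod 3"
    have "j < 3" "k < 3" by (simp_all add: j_def k_def)
    then have lam: "0 < lam i" "0 < lam j" "0 < lam k"
      and F: "F i = 0" "F j = 0" "F k = 0"
      using pos F0 i by auto
    have \<sigma>: "0 < sigmaB2 lam F i"
      using diff_gB2_zero_zero_pos[OF lam] cond[OF i]
      unfolding sigmaB2_def Let_def j_def[symmetric] k_def[symmetric] F
      by (simp add: j_def k_def)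
    have "wB2 lam F i - sigmaB2 lam F i = 2 * gB2 (lam j) (lam k) 0 0"
      unfolding wB2_def Let_def j_def[symmetric] k_def[symmetric] F by simp
    with gB2_zero_zero_pos[OF lam(2,3)] have \<sigma>w: "sigmaB2 lam F i < wB2 lam F i"
      by linarith
    with \<sigma> have "wB2 lam F i \<noteq> 0" by simp
    with \<sigma> \<sigma>w show ?thesis
      by (simp add: gammaB2_eq_half[where F = F, OF F(1)] deltaB2_eq[where F = F, OF F(1)])
  qed
  moreover have "0 \<le> ansatz lam F R \<Omega>" for R \<Omega>
    using coeffs by (intro ansatz_nonneg) force
  ultimately show ?thesis by blast
qed

end
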